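(* Let $h\in\mathbb{R}[x_1,\ldots,x_n]$ be hyperbolic of degree $d$ with respect to $\mathbf{e}$, let $k$ be a positive integer, let $\mathbf{v}\in\mathbb{R}^n$, and let $$g_{\mathbf{v}}(t):=(1-D_{\mathbf{v}})^k(1-D_{\mathbf{e}}+kD_{\mathbf{v}})h(t\mathbf{e}).$$ Then $g_{\mathbf{v}}(t)=T_{k,d}\big(h(t\mathbf{e}-\mathbf{v})\big)$, where $T_{k,d}:\mathbb{R}[t]\to\mathbb{R}[t]$ is the linear operator $$T_{k,d}\Big(\sum_{j\geq0}a_jt^j\Big)=-\sum_{j=0}^d\Big(\frac{j+1}{k+1}a_{j+1}+(d-1-j)a_j\Big)(d-j)!\binom{k+1}{d-j}t^j.$$ Moreover, if $f$ is a $[0,1/k]$-rooted polynomial of degree $d$, then $T_{k,d}(f)$ is real-rooted.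
   Context: A homogeneous polynomial $h$ of degree $d$ is hyperbolic with respect to $\mathbf{e}\in\mathbb{R}^n$ if $h(\mathbf{e})\neq0$ and for every $\mathbf{x}$, $t\mapsto h(t\mathbf{e}-\mathbf{x})$ has only real zeros. $D_{\mathbf{v}}=\sum_kv_k\partial/\partial x_k$ is the directional derivative; in the expression for $g_{\mathbf{v}}$ the operator is applied to $h$ and the result evaluated at $t\mathbf{e}$. For an interval $I\subseteq\mathbb{R}$, a univariate polynomial is $I$-rooted if all its zeros lie in $I$. *)

theory Defs
  imports "HOL-Analysis.Analysis" "HOL-Computational_Algebra.Polynomial"
begin

definition homog_poly_fun :: "nat \<Rightarrow> (real^'n \<Rightarrow> real) \<Rightarrow> bool" where
  "homog_poly_fun d h \<longleftrightarrow>
     (\<exists>S :: ('n \<Rightarrow> nat) set. \<exists>c :: ('n \<Rightarrow> nat) \<Rightarrow> real.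
        finite S \<and> (\<forall>\<alpha>\<in>S. (\<Sum>i\<in>UNIV. \<alpha> i) = d) \<and>
        h = (\<lambda>x. \<Sum>\<alpha>\<in>S. c \<alpha> * (\<Prod>i\<in>UNIV. (x $ i) ^ (\<alpha> i))))"

definition rooted_in :: "real set \<Rightarrow> real poly \<Rightarrow> bool" where
  "rooted_in I p \<longleftrightarrow> (\<forall>z. poly (map_poly complex_of_real p) z = 0 \<longrightarrow> z \<in> complex_of_real ` I)"

definition real_rooted :: "real poly \<Rightarrow> bool" where
  "real_rooted p \<longleftrightarrow> rooted_in UNIV p"

definition hyperbolic :: "nat \<Rightarrow> (real^'n \<Rightarrow> real) \<Rightarrow> real^'n \<Rightarrow> bool" where
  "hyperbolic d h e \<longleftrightarrow> homog_poly_fun d h \<and> h e \<noteq> 0 \<and>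
     (\<forall>x. \<forall>p. (\<forall>t. poly p t = h (t *\<^sub>R e - x)) \<longrightarrow> real_rooted p)"

definition Dv :: "real^'n \<Rightarrow> (real^'n \<Rightarrow> real) \<Rightarrow> (real^'n \<Rightarrow> real)" where
  "Dv v f = (\<lambda>x. deriv (\<lambda>s. f (x + s *\<^sub>R v)) 0)"

definition g_v :: "nat \<Rightarrow> (real^'n \<Rightarrow> real) \<Rightarrow> real^'n \<Rightarrow> real^'n \<Rightarrow> real \<Rightarrow> real" where
  "g_v k h e v t =
     (((\<lambda>f x. f x - Dv v f x) ^^ k)
        (\<lambda>x. h x - Dv e h x + real k * Dv v h x)) (t *\<^sub>R e)"

definition T_op :: "nat \<Rightarrow> nat \<Rightarrow> real poly \<Rightarrow> real poly" where
  "T_op k d p = - (\<Sum>j\<in>{0..d}. monom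
      (((real j + 1) / (real k + 1) * coeff p (j + 1) + (real d - 1 - real j) * coeff p j)
        * fact (d - j) * real ((k + 1) choose (d - j))) j)"

end

theory Submission
  imports Defs "HOL-Computational_Algebra.Fundamental_Theorem_Algebra"
begin

text \<open>
  Restrict \<open>h\<close> to the plane spanned by \<open>e\<close> and \<open>v\<close> in the coordinates \<open>(t, s) \<mapsto> t e - s v\<close>.
  If \<open>p(t) = h(t e - v)\<close>, homogeneity gives \<open>h(t e - s v) = \<Sum>\<^sub>j p\<^sub>j t\<^sup>j s\<^sup>d\<^sup>-\<^sup>j\<close>, the
  homogenization of \<open>p\<close>, on which \<open>D\<^sub>e\<close> and \<open>D\<^sub>v\<close> act as \<open>\<partial>\<^sub>t\<close> and \<open>-\<partial>\<^sub>s\<close>. So \<open>g\<^sub>v(t)\<close> is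
  the \<open>s\<^sup>0\<close>-coefficient of \<open>(1 + \<partial>\<^sub>s)\<^sup>k (1 - \<partial>\<^sub>t - k \<partial>\<^sub>s)\<close> applied to it, and the formula
  for \<open>T\<^sub>k\<^sub>,\<^sub>d\<close> is a coefficient computation.

  If all roots \<open>\<rho>\<^sub>i\<close> of \<open>f\<close> lie in \<open>[0, 1/k]\<close>, its homogenization \<open>c \<Prod>(t - \<rho>\<^sub>i s)\<close> has no
  zeros on the wedge \<open>Im t > 0, Im s < k Im t\<close>. An operator \<open>P \<mapsto> P - (a \<partial>\<^sub>t + b \<partial>\<^sub>s) P\<close>
  preserves zero-freeness on any region invariant under \<open>(t, s) \<mapsto> (t + l a, s + l b)\<close> for
  \<open>Im l \<ge> 0\<close>: along that complex line \<open>P\<close> is a polynomial \<open>q(l)\<close> with all roots in the lower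
  half-plane, so \<open>q'(0)/q(0)\<close> has negative imaginary part and cannot be \<open>1\<close>. The directions
  \<open>(0, -1)\<close> and \<open>(1, k)\<close> leave the wedge invariant; setting \<open>s = 0\<close> shows that \<open>T\<^sub>k\<^sub>,\<^sub>d(f)\<close>
  has no zeros in the upper half-plane, and real coefficients force all its zeros to be real.
\<close>

lemma poly_altdef_le:
  fixes p :: "'a::comm_semiring_1 poly"
  assumes "degree p \<le> n"
  shows "poly p x = (\<Sum>i\<le>n. coeff p i * x ^ i)"
  by (subst (1) poly_as_sum_of_monoms'[OF assms, symmetric]) (simp add: poly_sum poly_monom)

text \<open>A bivariate polynomial is an \<open>'a poly poly\<close>: the outer variable is \<open>s\<close>, the
  coefficients are polynomials in \<open>t\<close>.\<close>

definition poly2 :: "'a::comm_ring_1 poly poly \<Rightarrow> 'a \<Rightarrow> 'a \<Rightarrow> 'a" where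
  "poly2 P t s = poly (poly P [:s:]) t"

lemma poly2_add [simp]: "poly2 (P + Q) t s = poly2 P t s + poly2 Q t s"
  and poly2_diff [simp]: "poly2 (P - Q) t s = poly2 P t s - poly2 Q t s"
  and poly2_minus [simp]: "poly2 (- P) t s = - poly2 P t s"
  and poly2_of_nat_mult [simp]: "poly2 (of_nat n * P) t s = of_nat n * poly2 P t s"
  by (simp_all add: poly2_def of_nat_poly)

lemma poly2_0: "poly2 P t 0 = poly (coeff P 0) t"
  by (simp add: poly2_def poly_0_coeff_0)

lemma poly2_altdef:
  assumes "degree P \<le> N"
  shows "poly2 P t s = (\<Sum>i\<le>N. poly (coeff P i) t * s ^ i)"
  unfolding poly2_def poly_altdef_le[OF assms] by (simp add: poly_sum poly_mult poly_power)

lemma poly2_pderiv: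
  "poly2 (pderiv P) t s = (\<Sum>i\<le>degree P. poly (coeff P i) t * (of_nat i * s ^ (i - 1)))"
proof -
  have "poly2 (pderiv P) t s = (\<Sum>i\<le>degree P. poly (coeff (pderiv P) i) t * s ^ i)"
    by (rule poly2_altdef, rule degree_le) (simp add: coeff_pderiv coeff_eq_0)
  also have "\<dots> = (\<Sum>i\<le>Suc (degree P). poly (coeff P i) t * (of_nat i * s ^ (i - 1)))"
    by (subst sum.atMost_Suc_shift) (simp add: coeff_pderiv poly_mult mult_ac)
  also have "\<dots> = (\<Sum>i\<le>degree P. poly (coeff P i) t * (of_nat i * s ^ (i - 1)))"
    by (simp add: coeff_eq_0)
  finally show ?thesis .
qed

lemma poly2_map_pderiv:
  "poly2 (map_poly pderiv P) t s = (\<Sum>i\<le>degree P. poly (pderiv (coeff P i)) t * s ^ i)"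
  by (subst poly2_altdef[OF map_poly_degree_leq]) (simp add: coeff_map_poly)

lemma has_field_derivative_poly2_line:
  "((\<lambda>l. poly2 P (t + l * a) (s + l * b)) has_field_derivative
     a * poly2 (map_poly pderiv P) (t + l * a) (s + l * b) + b * poly2 (pderiv P) (t + l * a) (s + l * b))
   (at l)"
  unfolding poly2_map_pderiv poly2_pderiv unfolding poly2_altdef[OF order.refl]
  by (auto intro!: derivative_eq_intros sum.cong
        simp: sum_distrib_left sum.distrib[symmetric] algebra_simps)

lemma deriv_poly2_line:
  "deriv (\<lambda>r. poly2 Q (t + r * a) (s + r * b)) 0
     = a * poly2 (map_poly pderiv Q) t s + b * poly2 (pderiv Q) t s"
  using has_field_derivative_poly2_line[of Q t a s b 0] by (simp add: DERIV_imp_deriv)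

lemma poly2_line_poly:
  obtains q where "\<And>l. poly q l = poly2 P (t + l * a) (s + l * b)"
proof
  show "poly (\<Sum>i\<le>degree P. pcompose (coeff P i) [:t, a:] * [:s, b:] ^ i) l = poly2 P (t + l * a) (s + l * b)" for l
    by (simp add: poly2_altdef[OF order.refl] poly_sum poly_mult poly_pcompose poly_power mult_ac)
qed

lemma poly_pderiv_prod_linear:
  fixes r :: "'b \<Rightarrow> 'a::field"
  assumes "finite A" and "\<And>i. i \<in> A \<Longrightarrow> x \<noteq> r i"
  shows "poly (pderiv (\<Prod>i\<in>A. [:- r i, 1:])) x = (\<Prod>i\<in>A. x - r i) * (\<Sum>i\<in>A. 1 / (x - r i))"
  unfolding pderiv_prod poly_sum sum_distrib_left
proof (rule sum.cong)
  fix a assume "a \<in> A"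
  then show "poly ((\<Prod>i\<in>A - {a}. [:- r i, 1:]) * pderiv [:- r a, 1:]) x
      = (\<Prod>i\<in>A. x - r i) * (1 / (x - r a))"
    unfolding poly_mult poly_prod using assms by (simp add: pderiv_pCons prod_diff1)
qed simp

lemma poly_pderiv_neq_poly_if_upper_zero_free:
  fixes q :: "complex poly"
  assumes zero_free: "\<And>z. 0 \<le> Im z \<Longrightarrow> poly q z \<noteq> 0"
  shows "poly (pderiv q) 0 \<noteq> poly q 0"
proof -
  obtain r where q: "smult (lead_coeff q) (\<Prod>i<degree q. [:- r i, 1:]) = q"
    using complex_poly_decompose' by blast
  have Im_r: "Im (r i) < 0" if "i < degree q" for i
  proof (rule ccontr)
    have "poly q (r i) = 0"
      using that by (subst q[symmetric]) (auto simp: poly_prod)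
    moreover assume "\<not> Im (r i) < 0"
    ultimately show False using zero_free by force
  qed
  then have r_nz: "r i \<noteq> 0" if "i < degree q" for i
    using that by force
  define S where "S = (\<Sum>i<degree q. 1 / (0 - r i))"
  \<comment> \<open>\<open>S = q'(0)/q(0)\<close> is a sum of numbers \<open>-1/r i\<close> in the open lower half-plane.\<close>
  have Im_S: "Im S < 0" if "degree q > 0"
  proof -
    have "(\<Sum>i<degree q. Im (1 / (0 - r i))) < (\<Sum>i<degree q. 0)"
    proof (rule sum_strict_mono)
      fix i assume "i \<in> {..<degree q}"
      then have "Im (r i) < 0" "(Re (r i))\<^sup>2 + (Im (r i))\<^sup>2 > 0"
        using Im_r[of i] by (auto simp: sum_power2_gt_zero_iff)
      then show "Im (1 / (0 - r i)) < 0"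
        by (simp add: Im_divide divide_neg_pos)
    qed (use that in auto)
    then show ?thesis by (simp add: S_def Im_sum)
  qed
  have "S \<noteq> 1"
  proof (cases "degree q = 0")
    case True
    then show ?thesis by (simp add: S_def)
  next
    case False
    then show ?thesis using Im_S by force
  qed
  moreover have "poly (pderiv q) 0 = poly q 0 * S"
  proof -
    have "poly (pderiv (\<Prod>i<degree q. [:- r i, 1:])) 0 = (\<Prod>i<degree q. 0 - r i) * S"
      unfolding S_def using r_nz by (intro poly_pderiv_prod_linear) auto
    then show ?thesis
      by (subst (1 2) q[symmetric]) (simp add: pderiv_smult poly_prod)
  qed
  moreover have "poly q 0 \<noteq> 0"
    using zero_free by simp
  ultimately show ?thesis by simp
qed

lemma poly2_sub_directional_deriv_nonzero:
  fixes P :: "complex poly poly"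
  assumes invariant: "\<And>t s l. W t s \<Longrightarrow> 0 \<le> Im l \<Longrightarrow> W (t + l * a) (s + l * b)"
    and zero_free: "\<And>t s. W t s \<Longrightarrow> poly2 P t s \<noteq> 0"
    and "W t s"
  shows "poly2 P t s - (a * poly2 (map_poly pderiv P) t s + b * poly2 (pderiv P) t s) \<noteq> 0"
proof -
  obtain q where q: "\<And>l. poly q l = poly2 P (t + l * a) (s + l * b)"
    using poly2_line_poly by blast
  have "((\<lambda>l. poly q l) has_field_derivative
      a * poly2 (map_poly pderiv P) t s + b * poly2 (pderiv P) t s) (at 0)"
    unfolding q using has_field_derivative_poly2_line[of P t a s b 0] by simp
  then have "poly (pderiv q) 0 = a * poly2 (map_poly pderiv P) t s + b * poly2 (pderiv P) t s"
    using DERIV_unique[OF poly_DERIV] by blast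
  moreover have "poly (pderiv q) 0 \<noteq> poly q 0"
    using invariant zero_free \<open>W t s\<close> by (intro poly_pderiv_neq_poly_if_upper_zero_free) (simp add: q)
  ultimately show ?thesis by (simp add: q)
qed

definition homogenize :: "nat \<Rightarrow> 'a::comm_ring_1 poly \<Rightarrow> 'a poly poly" where
  "homogenize d p = (\<Sum>j\<le>d. monom (monom (coeff p j) j) (d - j))"

lemma coeff_coeff_homogenize:
  "coeff (coeff (homogenize d p) m) j = (if m + j = d then coeff p j else 0)"
proof -
  have "coeff (coeff (homogenize d p) m) j = (\<Sum>i\<le>d. if i = j \<and> m + j = d then coeff p j else 0)"
    unfolding homogenize_def coeff_sum by (intro sum.cong) (auto simp: coeff_monom)
  then show ?thesis by (simp add: sum.delta')
qed

lemma poly2_homogenize: "poly2 (homogenize d p) t s = (\<Sum>j\<le>d. coeff p j * t ^ j * s ^ (d - j))"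
  by (simp add: homogenize_def poly2_def poly_sum poly_monom poly_power mult_ac)

lemma poly2_homogenize_0: "poly2 (homogenize d p) t 0 = coeff p d * t ^ d"
proof -
  have "coeff (homogenize d p) 0 = monom (coeff p d) d"
    by (rule poly_eqI) (simp add: coeff_coeff_homogenize coeff_monom)
  then show ?thesis by (simp add: poly2_0 poly_monom)
qed

lemma poly2_homogenize_scale:
  fixes p :: "'a::field poly"
  assumes "degree p \<le> d" and "s \<noteq> 0"
  shows "poly2 (homogenize d p) t s = s ^ d * poly p (t / s)"
proof -
  have "coeff p j * t ^ j * s ^ (d - j) = s ^ d * (coeff p j * (t / s) ^ j)" if "j \<le> d" for j
    using that assms(2) by (simp add: power_divide power_diff)
  then show ?thesis
    unfolding poly2_homogenize poly_altdef_le[OF assms(1)] sum_distrib_left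
    by (intro sum.cong) auto
qed

lemma poly2_homogenize_linear_factors:
  fixes r :: "nat \<Rightarrow> 'a::field"
  shows "poly2 (homogenize d (smult c (\<Prod>i<d. [:- r i, 1:]))) t s = c * (\<Prod>i<d. t - s * r i)"
proof (cases "s = 0")
  case True
  have "degree (\<Prod>i<d. [:- r i, 1:]) = d"
    by (simp add: degree_prod_eq_sum_degree)
  then have "coeff (\<Prod>i<d. [:- r i, 1:]) d = 1"
    using lead_coeff_prod[of "\<lambda>i. [:- r i, 1:]" "{..<d}"] by simp
  then show ?thesis
    using True by (simp add: poly2_homogenize_0)
next
  case False
  have "degree (smult c (\<Prod>i<d. [:- r i, 1:])) \<le> d"
    by (simp add: degree_prod_eq_sum_degree)
  then have "poly2 (homogenize d (smult c (\<Prod>i<d. [:- r i, 1:]))) t s = c * (\<Prod>i<d. s * (t / s - r i))"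
    by (simp add: poly2_homogenize_scale[OF _ False] poly_prod prod.distrib)
  also have "\<dots> = c * (\<Prod>i<d. t - s * r i)"
    using False by (intro arg_cong[where f = "(*) c"] prod.cong) (auto simp: field_simps)
  finally show ?thesis .
qed

text \<open>The operator \<open>(1 - D\<^sub>v)\<^sup>k (1 - D\<^sub>e + k D\<^sub>v)\<close> in the coordinates
  \<open>(t, s) \<mapsto> t e - s v\<close>, where \<open>D\<^sub>e\<close> becomes \<open>\<partial>\<^sub>t\<close> and \<open>D\<^sub>v\<close> becomes \<open>-\<partial>\<^sub>s\<close>.\<close>

definition g_poly :: "nat \<Rightarrow> 'a::idom poly poly \<Rightarrow> 'a poly poly" where
  "g_poly k P = ((\<lambda>Q. Q + pderiv Q) ^^ k) (P - map_poly pderiv P - of_nat k * pderiv P)"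

lemma coeff_0_funpow_plus_pderiv:
  fixes G :: "'a::idom poly"
  shows "coeff (((\<lambda>Q. Q + pderiv Q) ^^ k) G) 0 = (\<Sum>m\<le>k. of_nat ((k choose m) * fact m) * coeff G m)"
proof (induction k arbitrary: G)
  case (Suc k)
  define g where "g m = coeff G m" for m
  have "coeff (((\<lambda>Q. Q + pderiv Q) ^^ Suc k) G) 0
      = (\<Sum>m\<le>k. of_nat ((k choose m) * fact m) * (g m + of_nat (Suc m) * g (Suc m)))"
    by (simp only: funpow_Suc_right o_def Suc.IH) (simp add: coeff_pderiv g_def)
  also have "\<dots> = (\<Sum>m\<le>k. of_nat ((k choose m) * fact m) * g m)
      + (\<Sum>m\<le>k. of_nat ((k choose m) * fact (Suc m)) * g (Suc m))"
    unfolding sum.distrib[symmetric]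
    by (intro sum.cong) (simp_all add: algebra_simps)
  also have "(\<Sum>m\<le>k. of_nat ((k choose m) * fact m) * g m)
      = (\<Sum>m\<le>Suc k. of_nat ((k choose m) * fact m) * g m)"
    by (simp add: binomial_eq_0)
  also have "\<dots> = g 0 + (\<Sum>m\<le>k. of_nat ((k choose Suc m) * fact (Suc m)) * g (Suc m))"
    by (subst sum.atMost_Suc_shift) simp
  also have "g 0 + (\<Sum>m\<le>k. of_nat ((k choose Suc m) * fact (Suc m)) * g (Suc m))
      + (\<Sum>m\<le>k. of_nat ((k choose m) * fact (Suc m)) * g (Suc m))
      = g 0 + (\<Sum>m\<le>k. of_nat ((Suc k choose Suc m) * fact (Suc m)) * g (Suc m))"
    by (simp add: sum.distrib[symmetric] algebra_simps)
  also have "\<dots> = (\<Sum>m\<le>Suc k. of_nat ((Suc k choose m) * fact m) * g m)"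
    by (subst sum.atMost_Suc_shift) simp
  finally show ?case by (simp add: g_def)
qed simp

lemma sum_choose_fact_delta:
  "(\<Sum>m\<le>k. of_nat ((k choose m) * fact m) * (if m + j = d then x m else 0))
     = (if j \<le> d then of_nat ((k choose (d - j)) * fact (d - j)) * x (d - j) else (0::'a::semiring_1))"
proof (cases "j \<le> d")
  case True
  then have "(\<Sum>m\<le>k. of_nat ((k choose m) * fact m) * (if m + j = d then x m else 0))
      = (\<Sum>m\<le>k. if m = d - j then of_nat ((k choose m) * fact m) * x m else 0)"
    by (intro sum.cong) auto
  then show ?thesis
    using True by (simp add: binomial_eq_0)
qed auto

lemma coeff_g_poly_homogenize:
  fixes p :: "'a::idom poly"
  shows "coeff (coeff (g_poly k (homogenize d p)) 0) j =
     (if j \<le> d then of_nat ((k choose (d - j)) * fact (d - j)) * coeff p j else 0)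
     - (if j < d then of_nat ((k choose (d - Suc j)) * fact (d - Suc j))
          * (of_nat (Suc j) * coeff p (Suc j) + of_nat (k * (d - j)) * coeff p j) else 0)"
proof -
  define W :: "nat \<Rightarrow> 'a" where "W m = of_nat ((k choose m) * fact m)" for m
  define G where "G = homogenize d p - map_poly pderiv (homogenize d p) - of_nat k * pderiv (homogenize d p)"
  have G: "coeff (coeff G m) j
      = (if m + j = d then coeff p j else 0)
        - (if m + Suc j = d then of_nat (Suc j) * coeff p (Suc j) else 0)
        - (if m + Suc j = d then of_nat (k * Suc m) * coeff p j else 0)" for m
    by (simp add: G_def coeff_map_poly coeff_pderiv coeff_coeff_homogenize of_nat_poly algebra_simps)
  have "coeff (coeff (g_poly k (homogenize d p)) 0) j = (\<Sum>m\<le>k. W m * coeff (coeff G m) j)"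
    unfolding g_poly_def G_def[symmetric] coeff_0_funpow_plus_pderiv coeff_sum W_def
    by (simp add: of_nat_poly)
  also have "\<dots> = (\<Sum>m\<le>k. W m * (if m + j = d then coeff p j else 0))
        - (\<Sum>m\<le>k. W m * (if m + Suc j = d then of_nat (Suc j) * coeff p (Suc j) else 0))
        - (\<Sum>m\<le>k. W m * (if m + Suc j = d then of_nat (k * Suc m) * coeff p j else 0))"
    unfolding G by (simp only: right_diff_distrib sum_subtractf)
  also have "\<dots> = (if j \<le> d then W (d - j) * coeff p j else 0)
      - (if j < d then W (d - Suc j) * (of_nat (Suc j) * coeff p (Suc j) + of_nat (k * (d - j)) * coeff p j) else 0)"
    unfolding W_def sum_choose_fact_delta by (auto simp: Suc_le_eq Suc_diff_Suc distrib_left)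
  finally show ?thesis by (simp add: W_def)
qed

lemma Suc_choose_Suc_times_fact:
  "(Suc n choose Suc r) * fact (Suc r) = Suc n * ((n choose r) * fact r)"
proof -
  have "(Suc n choose Suc r) * fact (Suc r) = (Suc r * (Suc n choose Suc r)) * fact r"
    by (simp only: fact_Suc of_nat_id mult_ac)
  then show ?thesis
    by (simp only: Suc_times_binomial mult.assoc)
qed

lemma choose_Suc_times_fact:
  "(of_nat ((n choose Suc r) * fact (Suc r)) :: 'a::comm_ring_1)
     = (of_nat n - of_nat r) * of_nat ((n choose r) * fact r)"
proof (cases "r \<le> n")
  case True
  have "Suc r * (n choose Suc r) = (n - r) * (n choose r)"
    using binomial_absorption[of r n] binomial_absorb_comp[of n r] by simp
  moreover have "(n choose Suc r) * fact (Suc r) = (Suc r * (n choose Suc r)) * fact r"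
    by (simp only: fact_Suc of_nat_id mult_ac)
  ultimately have "(n choose Suc r) * fact (Suc r) = (n - r) * ((n choose r) * fact r)"
    by (simp only: mult.assoc)
  then show ?thesis
    using True by (simp add: of_nat_diff)
qed (simp add: binomial_eq_0)

lemma coeff_T_op:
  fixes p :: "real poly"
  assumes "degree p \<le> d"
  shows "coeff (T_op k d p) j =
     (if j \<le> d then real ((k choose (d - j)) * fact (d - j)) * coeff p j else 0)
     - (if j < d then real ((k choose (d - Suc j)) * fact (d - Suc j))
          * (real (Suc j) * coeff p (Suc j) + real (k * (d - j)) * coeff p j) else 0)"
proof -
  have T: "coeff (T_op k d p) j = (if j \<le> d then
      - (((real j + 1) / (real k + 1) * coeff p (j + 1) + (real d - 1 - real j) * coeff p j)
         * (fact (d - j) * real ((k + 1) choose (d - j)))) else 0)"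
    unfolding T_op_def coeff_minus coeff_sum coeff_monom by (simp add: sum.delta mult.assoc)
  consider "d < j" | "j = d" | "j < d" by linarith
  then show ?thesis
  proof cases
    case 3
    define r where "r = d - Suc j"
    define C where "C = real ((k choose r) * fact r)"
    have d_j: "d - j = Suc r" "real d = real j + real r + 1" "real (d - j) = real r + 1"
      using 3 by (simp_all add: r_def of_nat_diff)
    have e1: "fact (Suc r) * real ((k + 1) choose Suc r) = (real k + 1) * C"
      using arg_cong[OF Suc_choose_Suc_times_fact[of k r], of real]
      by (simp only: C_def of_nat_mult of_nat_fact Suc_eq_plus1 of_nat_add of_nat_1 mult.commute)
    have e2: "real ((k choose Suc r) * fact (Suc r)) = (real k - real r) * C"
      unfolding C_def by (rule choose_Suc_times_fact)
    show ?thesis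
      using 3 unfolding T d_j(1) r_def[symmetric] C_def[symmetric] e1 e2
      by (simp add: d_j(2,3) field_simps)
  qed (use assms T in \<open>auto simp: coeff_eq_0\<close>)
qed

lemma coeff_g_poly_homogenize_eq_T_op:
  fixes p :: "real poly"
  assumes "degree p \<le> d"
  shows "coeff (g_poly k (homogenize d (map_poly of_real p))) 0 = (map_poly of_real (T_op k d p) :: 'a::real_field poly)"
  by (rule poly_eqI) (simp add: coeff_g_poly_homogenize coeff_map_poly coeff_T_op[OF assms])

definition zero_free_wedge :: "nat \<Rightarrow> complex poly poly \<Rightarrow> bool" where
  "zero_free_wedge k P \<longleftrightarrow> (\<forall>t s. 0 < Im t \<longrightarrow> Im s < real k * Im t \<longrightarrow> poly2 P t s \<noteq> 0)"

lemma zero_free_wedge_plus_pderiv: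
  assumes "zero_free_wedge k P"
  shows "zero_free_wedge k (P + pderiv P)"
  unfolding zero_free_wedge_def
proof (intro allI impI)
  fix t s :: complex
  assume "0 < Im t" "Im s < real k * Im t"
  then have "poly2 P t s - (0 * poly2 (map_poly pderiv P) t s + (- 1) * poly2 (pderiv P) t s) \<noteq> 0"
    using assms unfolding zero_free_wedge_def
    by (intro poly2_sub_directional_deriv_nonzero[where W = "\<lambda>t s. 0 < Im t \<and> Im s < real k * Im t"])
      auto
  then show "poly2 (P + pderiv P) t s \<noteq> 0" by simp
qed

lemma zero_free_wedge_funpow_plus_pderiv:
  "zero_free_wedge k P \<Longrightarrow> zero_free_wedge k (((\<lambda>Q. Q + pderiv Q) ^^ n) P)"
  by (induction n) (simp_all add: zero_free_wedge_plus_pderiv)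

lemma zero_free_wedge_sub_pderivs:
  assumes "zero_free_wedge k P"
  shows "zero_free_wedge k (P - map_poly pderiv P - of_nat k * pderiv P)"
  unfolding zero_free_wedge_def
proof (intro allI impI)
  fix t s :: complex
  assume "0 < Im t" "Im s < real k * Im t"
  then have "poly2 P t s - (1 * poly2 (map_poly pderiv P) t s + of_nat k * poly2 (pderiv P) t s) \<noteq> 0"
    using assms unfolding zero_free_wedge_def
    by (intro poly2_sub_directional_deriv_nonzero[where W = "\<lambda>t s. 0 < Im t \<and> Im s < real k * Im t"])
      (auto simp: algebra_simps)
  then show "poly2 (P - map_poly pderiv P - of_nat k * pderiv P) t s \<noteq> 0"
    by (simp add: algebra_simps)
qed

lemma zero_free_wedge_g_poly:
  "zero_free_wedge k P \<Longrightarrow> zero_free_wedge k (g_poly k P)"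
  unfolding g_poly_def by (intro zero_free_wedge_funpow_plus_pderiv zero_free_wedge_sub_pderivs)

lemma zero_free_wedge_homogenize:
  fixes f :: "real poly"
  assumes "k > 0" and "degree f = d" and rooted: "rooted_in {0..1 / real k} f"
  shows "zero_free_wedge k (homogenize d (map_poly complex_of_real f))"
proof -
  define fc where "fc = map_poly complex_of_real f"
  have "poly fc \<i> \<noteq> 0"
  proof
    assume "poly fc \<i> = 0"
    then have "\<i> \<in> complex_of_real ` {0..1 / real k}"
      using rooted unfolding rooted_in_def fc_def by blast
    then show False by (auto simp: complex_eq_iff)
  qed
  then have "fc \<noteq> 0" by auto
  have "degree fc = d"
    using \<open>degree f = d\<close> by (simp add: fc_def degree_map_poly)
  then obtain r where fc: "smult (lead_coeff fc) (\<Prod>i<d. [:- r i, 1:]) = fc"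
    using complex_poly_decompose'[of fc] by metis
  have roots: "r i \<in> complex_of_real ` {0..1 / real k}" if "i < d" for i
  proof -
    have "poly fc (r i) = 0"
      using that by (subst fc[symmetric]) (auto simp: poly_prod)
    then show ?thesis
      using rooted unfolding rooted_in_def fc_def by blast
  qed
  have "t - s * r i \<noteq> 0" if "i < d" "0 < Im t" "Im s < real k * Im t" for i t s
  proof -
    obtain \<rho> where \<rho>: "r i = of_real \<rho>" "0 \<le> \<rho>" "\<rho> \<le> 1 / real k"
      using roots[OF \<open>i < d\<close>] by auto
    then have "\<rho> * real k \<le> 1"
      using \<open>k > 0\<close> by (simp add: pos_le_divide_eq)
    then have "\<rho> * Im s < Im t"
      using \<rho>(2) that(2,3)
      by (smt (verit, best) mult.commute mult.left_commute mult_left_le mult_nonneg_nonpos2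
          ordered_comm_semiring_class.comm_mult_left_mono)
    then have "0 < Im (t - s * r i)" by (simp add: \<rho>(1) mult.commute)
    then show ?thesis by auto
  qed
  then show ?thesis
    unfolding zero_free_wedge_def fc_def[symmetric]
    by (subst fc[symmetric]) (simp add: poly2_homogenize_linear_factors \<open>fc \<noteq> 0\<close>)
qed

lemma real_rooted_if_upper_zero_free:
  fixes p :: "real poly"
  assumes upper: "\<And>z. 0 < Im z \<Longrightarrow> poly (map_poly complex_of_real p) z \<noteq> 0"
  shows "real_rooted p"
  unfolding real_rooted_def rooted_in_def
proof (intro allI impI)
  fix z assume root: "poly (map_poly complex_of_real p) z = 0"
  have "poly (map_poly complex_of_real p) (cnj z) = 0"
    using root by (simp add: real_poly_cnj_root_iff coeff_map_poly)
  then have "Im z = 0"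
    using upper[of z] upper[of "cnj z"] root by (cases "Im z" rule: linorder_cases) auto
  then show "z \<in> complex_of_real ` UNIV"
    by (metis complex_is_Real_iff rangeI Reals_def)
qed

lemma homog_poly_fun_scale:
  assumes "homog_poly_fun d h"
  shows "h (a *\<^sub>R x) = a ^ d * h x"
proof -
  obtain S c where deg: "\<And>\<alpha>. \<alpha> \<in> S \<Longrightarrow> (\<Sum>i\<in>UNIV. \<alpha> i) = d"
    and h: "h = (\<lambda>x. \<Sum>\<alpha>\<in>S. c \<alpha> * (\<Prod>i\<in>UNIV. (x $ i) ^ \<alpha> i))"
    using assms unfolding homog_poly_fun_def by blast
  have "(\<Prod>i\<in>UNIV. ((a *\<^sub>R x) $ i) ^ \<alpha> i) = a ^ d * (\<Prod>i\<in>UNIV. (x $ i) ^ \<alpha> i)"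
    if "\<alpha> \<in> S" for \<alpha>
  proof -
    have "(\<Prod>i\<in>UNIV. ((a *\<^sub>R x) $ i) ^ \<alpha> i) = a ^ (\<Sum>i\<in>UNIV. \<alpha> i) * (\<Prod>i\<in>UNIV. (x $ i) ^ \<alpha> i)"
      by (simp add: power_mult_distrib prod.distrib power_sum)
    then show ?thesis using deg[OF that] by simp
  qed
  then show ?thesis
    unfolding h by (simp add: sum_distrib_left mult_ac)
qed

lemma homog_poly_fun_continuous:
  assumes "homog_poly_fun d h"
  shows "isCont h x"
  using assms unfolding homog_poly_fun_def by (auto intro!: continuous_intros)

lemma homog_poly_fun_line_poly:
  assumes "homog_poly_fun d h"
  obtains q where "degree q \<le> d" and "\<And>t. poly q t = h (t *\<^sub>R a + b)"
proof -
  obtain S c where "finite S" and deg: "\<And>\<alpha>. \<alpha> \<in> S \<Longrightarrow> (\<Sum>i\<in>UNIV. \<alpha> i) = d"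
    and h: "h = (\<lambda>x. \<Sum>\<alpha>\<in>S. c \<alpha> * (\<Prod>i\<in>UNIV. (x $ i) ^ \<alpha> i))"
    using assms unfolding homog_poly_fun_def by blast
  define q where "q = (\<Sum>\<alpha>\<in>S. smult (c \<alpha>) (\<Prod>i\<in>UNIV. [:b $ i, a $ i:] ^ \<alpha> i))"
  have "degree (smult (c \<alpha>) (\<Prod>i\<in>UNIV. [:b $ i, a $ i:] ^ \<alpha> i)) \<le> d" if "\<alpha> \<in> S" for \<alpha>
  proof -
    have "degree (\<Prod>i\<in>UNIV. [:b $ i, a $ i:] ^ \<alpha> i) \<le> (\<Sum>i\<in>UNIV. degree ([:b $ i, a $ i:] ^ \<alpha> i))"
      using degree_prod_sum_le[of UNIV "\<lambda>i. [:b $ i, a $ i:] ^ \<alpha> i"] by simp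
    also have "\<dots> \<le> (\<Sum>i\<in>UNIV. \<alpha> i)"
      by (intro sum_mono order.trans[OF degree_power_le]) simp
    finally show ?thesis
      using deg[OF that] degree_smult_le order.trans by metis
  qed
  then have "degree q \<le> d"
    unfolding q_def by (intro degree_sum_le \<open>finite S\<close>)
  moreover have "poly q t = h (t *\<^sub>R a + b)" for t
    unfolding q_def h by (simp add: poly_sum poly_prod poly_power algebra_simps)
  ultimately show ?thesis using that by blast
qed

lemma homog_poly_fun_line_degree:
  assumes hom: "homog_poly_fun d h" and p: "\<And>t. poly p t = h (t *\<^sub>R a + b)"
  shows "degree p \<le> d"
proof -
  obtain q where "degree q \<le> d" and q: "\<And>t. poly q t = h (t *\<^sub>R a + b)"
    using homog_poly_fun_line_poly[OF hom] by blast
  moreover have "poly p = poly q"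
    by (simp add: fun_eq_iff p q)
  ultimately show ?thesis
    by (simp add: poly_eq_poly_eq_iff)
qed

definition plane_restriction :: "real^'n \<Rightarrow> real^'n \<Rightarrow> (real^'n \<Rightarrow> real) \<Rightarrow> real poly poly \<Rightarrow> bool" where
  "plane_restriction e v F Q \<longleftrightarrow> (\<forall>t s. F (t *\<^sub>R e - s *\<^sub>R v) = poly2 Q t s)"

lemma plane_restriction_homogenize:
  assumes hom: "homog_poly_fun d h" and p: "\<And>t. poly p t = h (t *\<^sub>R e - v)"
  shows "plane_restriction e v h (homogenize d p)"
  unfolding plane_restriction_def
proof (intro allI)
  fix t s :: real
  have "degree p \<le> d"
    using p by (intro homog_poly_fun_line_degree[OF hom, of _ e "- v"]) simp
  have off_0: "h (t *\<^sub>R e - s *\<^sub>R v) = poly2 (homogenize d p) t s" if "s \<noteq> 0" for s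
  proof -
    have "t *\<^sub>R e - s *\<^sub>R v = s *\<^sub>R ((t / s) *\<^sub>R e - v)"
      using that by (simp add: scaleR_right_diff_distrib)
    then have "h (t *\<^sub>R e - s *\<^sub>R v) = s ^ d * poly p (t / s)"
      by (simp only: homog_poly_fun_scale[OF hom] p)
    also have "\<dots> = poly2 (homogenize d p) t s"
      using that by (simp add: poly2_homogenize_scale[OF \<open>degree p \<le> d\<close>])
    finally show ?thesis .
  qed
  have "isCont (\<lambda>s. h (t *\<^sub>R e - s *\<^sub>R v)) 0"
    by (rule isCont_o2[OF _ homog_poly_fun_continuous[OF hom]]) (intro continuous_intros)
  moreover have "\<forall>s. s \<noteq> 0 \<longrightarrow> h (t *\<^sub>R e - s *\<^sub>R v) = poly2 (homogenize d p) t s"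
    using off_0 by blast
  ultimately have "(\<lambda>s. poly2 (homogenize d p) t s) \<midarrow>0\<rightarrow> h (t *\<^sub>R e - 0 *\<^sub>R v)"
    unfolding isCont_def by (simp only: LIM_equal)
  moreover have "isCont (\<lambda>s. poly2 (homogenize d p) t s) 0"
    unfolding poly2_homogenize by (intro continuous_intros)
  then have "(\<lambda>s. poly2 (homogenize d p) t s) \<midarrow>0\<rightarrow> poly2 (homogenize d p) t 0"
    unfolding isCont_def .
  ultimately have "h (t *\<^sub>R e - 0 *\<^sub>R v) = poly2 (homogenize d p) t 0"
    by (rule LIM_unique)
  then show "h (t *\<^sub>R e - s *\<^sub>R v) = poly2 (homogenize d p) t s"
    using off_0 by (cases "s = 0") auto
qed

lemma plane_restriction_Dv_e:
  assumes "plane_restriction e v F Q"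
  shows "plane_restriction e v (Dv e F) (map_poly pderiv Q)"
proof -
  have "t *\<^sub>R e - s *\<^sub>R v + r *\<^sub>R e = (t + r * 1) *\<^sub>R e - (s + r * 0) *\<^sub>R v" for t s r
    by (simp add: scaleR_add_left)
  then have "F (t *\<^sub>R e - s *\<^sub>R v + r *\<^sub>R e) = poly2 Q (t + r * 1) (s + r * 0)" for t s r
    using assms unfolding plane_restriction_def by metis
  then show ?thesis
    unfolding plane_restriction_def Dv_def by (simp only: deriv_poly2_line) simp
qed

lemma plane_restriction_Dv_v:
  assumes "plane_restriction e v F Q"
  shows "plane_restriction e v (Dv v F) (- pderiv Q)"
proof -
  have "t *\<^sub>R e - s *\<^sub>R v + r *\<^sub>R v = (t + r * 0) *\<^sub>R e - (s + r * - 1) *\<^sub>R v" for t s r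
    by (simp add: scaleR_add_left scaleR_diff_left)
  then have "F (t *\<^sub>R e - s *\<^sub>R v + r *\<^sub>R v) = poly2 Q (t + r * 0) (s + r * - 1)" for t s r
    using assms unfolding plane_restriction_def by metis
  then show ?thesis
    unfolding plane_restriction_def Dv_def by (simp only: deriv_poly2_line) simp
qed

lemma plane_restriction_funpow_one_minus_Dv:
  assumes "plane_restriction e v F Q"
  shows "plane_restriction e v (((\<lambda>f x. f x - Dv v f x) ^^ n) F) (((\<lambda>Q. Q + pderiv Q) ^^ n) Q)"
proof (induction n)
  case (Suc n)
  then show ?case
    using plane_restriction_Dv_v[OF Suc] by (simp add: plane_restriction_def)
qed (use assms in simp)

lemma g_v_eq_poly_g_poly:
  assumes "plane_restriction e v h P"
  shows "g_v k h e v t = poly (coeff (g_poly k P) 0) t"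
proof -
  have "plane_restriction e v (\<lambda>x. h x - Dv e h x + real k * Dv v h x)
      (P - map_poly pderiv P - of_nat k * pderiv P)"
    using assms plane_restriction_Dv_e[OF assms] plane_restriction_Dv_v[OF assms]
    by (simp add: plane_restriction_def)
  then have "plane_restriction e v
      (((\<lambda>f x. f x - Dv v f x) ^^ k) (\<lambda>x. h x - Dv e h x + real k * Dv v h x)) (g_poly k P)"
    unfolding g_poly_def by (rule plane_restriction_funpow_one_minus_Dv)
  then have "(((\<lambda>f x. f x - Dv v f x) ^^ k) (\<lambda>x. h x - Dv e h x + real k * Dv v h x))
      (t *\<^sub>R e - 0 *\<^sub>R v) = poly2 (g_poly k P) t 0"
    unfolding plane_restriction_def by blast
  then show ?thesis
    by (simp add: g_v_def poly2_0)
qed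

theorem lemma6p8:
  fixes h :: "real^'n \<Rightarrow> real" and e v :: "real^'n" and d k :: nat
  assumes "hyperbolic d h e" and "k > 0"
  shows "(\<forall>p. (\<forall>t. poly p t = h (t *\<^sub>R e - v)) \<longrightarrow>
            (\<forall>t. g_v k h e v t = poly (T_op k d p) t))
       \<and> (\<forall>f. degree f = d \<and> rooted_in {0..1 / real k} f \<longrightarrow> real_rooted (T_op k d f))"
proof (intro conjI allI impI)
  have hom: "homog_poly_fun d h"
    using assms(1) by (simp add: hyperbolic_def)
  fix p t
  assume p: "\<forall>t. poly p t = h (t *\<^sub>R e - v)"
  have "degree p \<le> d"
    using p by (intro homog_poly_fun_line_degree[OF hom, of _ e "- v"]) simp
  have "g_v k h e v t = poly (coeff (g_poly k (homogenize d p)) 0) t"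
    using plane_restriction_homogenize[OF hom] p by (simp add: g_v_eq_poly_g_poly)
  also have "\<dots> = poly (T_op k d p) t"
    using coeff_g_poly_homogenize_eq_T_op[OF \<open>degree p \<le> d\<close>, where 'a = real] by simp
  finally show "g_v k h e v t = poly (T_op k d p) t" .
next
  fix f :: "real poly"
  assume f: "degree f = d \<and> rooted_in {0..1 / real k} f"
  define G where "G = g_poly k (homogenize d (map_poly complex_of_real f))"
  have zero_free: "zero_free_wedge k G"
    unfolding G_def using f assms(2) by (intro zero_free_wedge_g_poly zero_free_wedge_homogenize) auto
  have T: "coeff G 0 = map_poly complex_of_real (T_op k d f)"
    unfolding G_def using f by (intro coeff_g_poly_homogenize_eq_T_op) simp
  show "real_rooted (T_op k d f)"
  proof (rule real_rooted_if_upper_zero_free)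
    fix z :: complex
    assume "0 < Im z"
    then have "poly2 G z 0 \<noteq> 0"
      using zero_free assms(2) by (simp add: zero_free_wedge_def)
    then show "poly (map_poly complex_of_real (T_op k d f)) z \<noteq> 0"
      by (simp add: poly2_0 T)
  qed
qed

end
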